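(* Let $\mathcal U$ be an unbalanced critical update family and $\alpha=\alpha(\mathcal U)$. Then there exists $u^*\in S^1$ such that $\min\{\alpha(u^* ),\alpha(-u^* )\}\ge\alpha+1$.
   Context: An update family is a finite collection $\mathcal U$ of finite subsets of $\mathbb Z^2\setminus\{0\}$ acting by $A_{t+1}=A_t\cup\{x:x+X\subset A_t\text{ for some }X\in\mathcal U\}$, closure $[A]=\bigcup_tA_t$. $\mathbb H_u=\{x\in\mathbb Z^2:\langle x,u\rangle<0\}$, $u$ stable if $[\mathbb H_u]=\mathbb H_u$, $\mathcal S$ the stable set. For rational $u$, $\ell_u=\{x:\langle x,u\rangle=0\}$, $\ell_u^\pm$ = origin plus sites of $\ell_u$ right/left of the origin looking in direction $u$; $\alpha^\pm(u)$ = minimal $|Z|$ with $[\mathbb H_u\cup Z]\cap\ell_u^\pm$ infinite; $\alpha(u)=\min\{\alpha^+,\alpha^-\}$ if both finite, else $\infty$ (irrational $u$: $\infty$ if stable, $0$ otherwise). $\alpha(\mathcal U)=\min_C\sup_{u\in C}\alpha(u)$ over open semicircles $C$. Critical: some semicircle has finite intersection with $\mathcal S$ and every open semicircle meets $\mathcal S$. A critical $\mathcal U$ is balanced if some closed semicircle $C$ has $\alpha(u)\le\alpha(\mathcal U)$ for all $u\in C$, and unbalanced otherwise. *)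

theory Defs
  imports Main "HOL-Library.Extended_Nat"
begin

type_synonym site = "int \<times> int"
type_synonym dir = "real \<times> real"

definition vadd :: "site \<Rightarrow> site \<Rightarrow> site" where
  "vadd x y = (fst x + fst y, snd x + snd y)"

definition update_family :: "site set set \<Rightarrow> bool" where
  "update_family U \<longleftrightarrow> finite U \<and> (\<forall>X\<in>U. finite X \<and> (0, 0) \<notin> X)"

definition step :: "site set set \<Rightarrow> site set \<Rightarrow> site set" where
  "step U A = A \<union> {x. \<exists>X\<in>U. vadd x ` X \<subseteq> A}"

definition closure_U :: "site set set \<Rightarrow> site set \<Rightarrow> site set" where
  "closure_U U A = (\<Union>t. (step U ^^ t) A)"

definition S1 :: "dir set" where
  "S1 = {u. (fst u)\<^sup>2 + (snd u)\<^sup>2 = 1}"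

definition ip :: "site \<Rightarrow> dir \<Rightarrow> real" where
  "ip x u = real_of_int (fst x) * fst u + real_of_int (snd x) * snd u"

definition halfplane :: "dir \<Rightarrow> site set" where
  "halfplane u = {x. ip x u < 0}"

definition stable_set :: "site set set \<Rightarrow> dir set" where
  "stable_set U = {u \<in> S1. closure_U U (halfplane u) = halfplane u}"

definition rational_dir :: "dir \<Rightarrow> bool" where
  "rational_dir u \<longleftrightarrow> (\<exists>a b :: int. (a, b) \<noteq> (0, 0) \<and> fst u * real_of_int b = snd u * real_of_int a)"

definition line :: "dir \<Rightarrow> site set" where
  "line u = {x. ip x u = 0}"

text \<open>Coordinate along the line in the direction to the right of u (u rotated clockwise).\<close>
definition rcoord :: "site \<Rightarrow> dir \<Rightarrow> real" where
  "rcoord x u = real_of_int (fst x) * snd u - real_of_int (snd x) * fst u"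

definition line_plus :: "dir \<Rightarrow> site set" where
  "line_plus u = {x \<in> line u. rcoord x u \<ge> 0}"

definition line_minus :: "dir \<Rightarrow> site set" where
  "line_minus u = {x \<in> line u. rcoord x u \<le> 0}"

definition alpha_plus :: "site set set \<Rightarrow> dir \<Rightarrow> enat" where
  "alpha_plus U u = Inf {enat (card Z) | Z. finite Z \<and>
      infinite (closure_U U (halfplane u \<union> Z) \<inter> line_plus u)}"

definition alpha_minus :: "site set set \<Rightarrow> dir \<Rightarrow> enat" where
  "alpha_minus U u = Inf {enat (card Z) | Z. finite Z \<and>
      infinite (closure_U U (halfplane u \<union> Z) \<inter> line_minus u)}"

definition alpha_dir :: "site set set \<Rightarrow> dir \<Rightarrow> enat" where
  "alpha_dir U u =
     (if rational_dir u then
        (if alpha_plus U u \<noteq> \<infinity> \<and> alpha_minus U u \<noteq> \<infinity>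
         then min (alpha_plus U u) (alpha_minus U u) else \<infinity>)
      else (if u \<in> stable_set U then \<infinity> else 0))"

definition open_semicircle :: "dir \<Rightarrow> dir set" where
  "open_semicircle v = {u \<in> S1. fst u * fst v + snd u * snd v > 0}"

definition closed_semicircle :: "dir \<Rightarrow> dir set" where
  "closed_semicircle v = {u \<in> S1. fst u * fst v + snd u * snd v \<ge> 0}"

definition alpha_family :: "site set set \<Rightarrow> enat" where
  "alpha_family U = (INF v\<in>S1. SUP u\<in>open_semicircle v. alpha_dir U u)"

definition critical :: "site set set \<Rightarrow> bool" where
  "critical U \<longleftrightarrow>
     (\<exists>v\<in>S1. finite (stable_set U \<inter> open_semicircle v)) \<and>
     (\<forall>v\<in>S1. stable_set U \<inter> open_semicircle v \<noteq> {})"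

definition balanced :: "site set set \<Rightarrow> bool" where
  "balanced U \<longleftrightarrow> critical U \<and>
     (\<exists>v\<in>S1. \<forall>u\<in>closed_semicircle v. alpha_dir U u \<le> alpha_family U)"

definition unbalanced :: "site set set \<Rightarrow> bool" where
  "unbalanced U \<longleftrightarrow> critical U \<and> \<not> balanced U"

end

theory Submission
  imports Defs
begin

(* Let alpha = alpha_family U; if alpha is infinite, U is trivially balanced.
   Since enat is well ordered, some open semicircle C(v) attains the infimum defining alpha,
   so alpha_dir U u <= alpha on C(v).  As U is unbalanced, the closed semicircle over v
   contains a direction p with alpha_dir U p > alpha; p lies on the boundary of C(v), i.e.
   p is orthogonal to v, and alpha_dir U p >= alpha + 1.  The witness is u* = p: suppose
   q = -p had alpha_dir U q <= alpha.  Then v = sigma * rot q for a sign sigma; order the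
   sites lexicographically by (<x,q>, sigma * rcoord x q).
   - If every rule contains a lexicographically positive site, then q is stable and a
     finite set Z only infects a bounded part of the sigma side of l_q (a linear potential
     defines a region that the dynamics never enters), so alpha_dir U q is infinite.
   - Otherwise some rule X0 has no lexicographically positive site, and tilting v slightly
     towards q gives a closed semicircle each of whose directions u lies in C(v), equals q,
     or has X0 inside the open half-plane H_u, whence alpha_dir U u = 0; so U is balanced. *)

section \<open>Lattice arithmetic and the closure operator\<close>

lemma ip_vadd: "ip (vadd x y) u = ip x u + ip y u"
  by (simp add: ip_def vadd_def algebra_simps)

lemma rcoord_vadd: "rcoord (vadd x y) u = rcoord x u + rcoord y u"
  by (simp add: rcoord_def vadd_def algebra_simps)

lemma step_mono: "A \<subseteq> B \<Longrightarrow> step U A \<subseteq> step U B"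
  unfolding step_def by (auto dest: subset_trans)

lemma subset_closure: "A \<subseteq> closure_U U A"
proof -
  have "(step U ^^ 0) A = A" by simp
  thus ?thesis unfolding closure_U_def by (metis UNIV_I UN_upper)
qed

lemma step_subset_closure: "step U A \<subseteq> closure_U U A"
proof -
  have "(step U ^^ 1) A = step U A" by simp
  thus ?thesis unfolding closure_U_def by (metis UNIV_I UN_upper)
qed

lemma closure_least:
  assumes "A \<subseteq> B" and "step U B \<subseteq> B"
  shows "closure_U U A \<subseteq> B"
proof -
  have "(step U ^^ t) A \<subseteq> B" for t
  proof (induction t)
    case 0
    show ?case using assms(1) by simp
  next
    case (Suc t)
    have "step U ((step U ^^ t) A) \<subseteq> step U B" using Suc.IH by (rule step_mono)
    thus ?case using assms(2) by simp
  qed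
  thus ?thesis unfolding closure_U_def by blast
qed

lemma closure_avoids_invariant_set:
  assumes "A \<inter> K = {}" and "\<And>x X. x \<in> K \<Longrightarrow> X \<in> U \<Longrightarrow> \<exists>y\<in>X. vadd x y \<in> K"
  shows "closure_U U A \<inter> K = {}"
proof -
  have "step U (- K) \<subseteq> - K"
  proof
    fix x assume x: "x \<in> step U (- K)"
    show "x \<in> - K"
    proof
      assume "x \<in> K"
      with x obtain X where "X \<in> U" "vadd x ` X \<subseteq> - K" unfolding step_def by auto
      with assms(2)[OF \<open>x \<in> K\<close>] show False by blast
    qed
  qed
  with assms(1) have "closure_U U A \<subseteq> - K" by (intro closure_least) auto
  thus ?thesis by blast
qed

section \<open>Geometry of unit vectors\<close>

lemma S1_norm: "u \<in> S1 \<Longrightarrow> (fst u)\<^sup>2 + (snd u)\<^sup>2 = 1"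
  by (simp add: S1_def)

lemma ip_in_frame:
  assumes "q \<in> S1"
  shows "ip y u = (fst u * fst q + snd u * snd q) * ip y q
                  + (fst u * snd q - snd u * fst q) * rcoord y q"
proof -
  have "(fst u * fst q + snd u * snd q) * ip y q + (fst u * snd q - snd u * fst q) * rcoord y q
        = ip y u * ((fst q)\<^sup>2 + (snd q)\<^sup>2)"
    by (simp add: ip_def rcoord_def power2_eq_square algebra_simps)
  thus ?thesis using S1_norm[OF assms] by simp
qed

lemma site_on_line:
  assumes "q \<in> S1" and "ip x q = 0"
  shows "real_of_int (fst x) = rcoord x q * snd q"
    and "real_of_int (snd x) = - (rcoord x q * fst q)"
proof -
  have "real_of_int (fst x) * ((fst q)\<^sup>2 + (snd q)\<^sup>2) = ip x q * fst q + rcoord x q * snd q"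
   and "real_of_int (snd x) * ((fst q)\<^sup>2 + (snd q)\<^sup>2) = ip x q * snd q - rcoord x q * fst q"
    by (simp_all add: ip_def rcoord_def power2_eq_square algebra_simps)
  thus "real_of_int (fst x) = rcoord x q * snd q" "real_of_int (snd x) = - (rcoord x q * fst q)"
    using S1_norm[OF assms(1)] assms(2) by simp_all
qed

lemma site_eq_zero:
  assumes "q \<in> S1" and "ip x q = 0" and "rcoord x q = 0"
  shows "x = (0, 0)"
  using site_on_line[OF assms(1,2)] assms(3) by (simp add: prod_eq_iff)

lemma S1_coord_bound:
  assumes "q \<in> S1"
  shows "\<bar>fst q\<bar> \<le> 1" and "\<bar>snd q\<bar> \<le> 1"
proof -
  have "(fst q)\<^sup>2 \<le> 1" "(snd q)\<^sup>2 \<le> 1"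
    using S1_norm[OF assms] zero_le_power2[of "fst q"] zero_le_power2[of "snd q"] by linarith+
  thus "\<bar>fst q\<bar> \<le> 1" "\<bar>snd q\<bar> \<le> 1" by (simp_all add: abs_square_le_1)
qed

lemma finite_line_segment:
  assumes "q \<in> S1"
  shows "finite {x \<in> line q. \<bar>rcoord x q\<bar> \<le> N}"
proof (rule finite_subset)
  show "{x \<in> line q. \<bar>rcoord x q\<bar> \<le> N} \<subseteq> {-\<lceil>N\<rceil>..\<lceil>N\<rceil>} \<times> {-\<lceil>N\<rceil>..\<lceil>N\<rceil>}"
  proof
    fix x assume x: "x \<in> {x \<in> line q. \<bar>rcoord x q\<bar> \<le> N}"
    hence ip0: "ip x q = 0" and r: "\<bar>rcoord x q\<bar> \<le> N" unfolding line_def by auto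
    have "\<bar>rcoord x q * c\<bar> \<le> N" if "\<bar>c\<bar> \<le> 1" for c
      using r that by (simp add: abs_mult) (metis abs_ge_zero mult_left_le order_trans)
    hence "\<bar>real_of_int (fst x)\<bar> \<le> N" "\<bar>real_of_int (snd x)\<bar> \<le> N"
      using site_on_line[OF assms ip0] S1_coord_bound[OF assms] by auto
    hence "\<bar>fst x\<bar> \<le> \<lceil>N\<rceil>" "\<bar>snd x\<bar> \<le> \<lceil>N\<rceil>"
      by (metis ceiling_mono ceiling_of_int of_int_abs)+
    thus "x \<in> {-\<lceil>N\<rceil>..\<lceil>N\<rceil>} \<times> {-\<lceil>N\<rceil>..\<lceil>N\<rceil>}" by (cases x) auto
  qed
qed simp

lemma orthogonal_unit_vector:
  assumes q: "q \<in> S1" and v: "v \<in> S1" and qv: "fst q * fst v + snd q * snd v = 0"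
  obtains \<sigma> :: real where "\<sigma> = 1 \<or> \<sigma> = -1" and "v = (- \<sigma> * snd q, \<sigma> * fst q)"
proof -
  define t where "t = fst q * snd v - snd q * fst v"
  have f1: "fst v * ((fst q)\<^sup>2 + (snd q)\<^sup>2) = - t * snd q + fst q * (fst q * fst v + snd q * snd v)"
   and f2: "snd v * ((fst q)\<^sup>2 + (snd q)\<^sup>2) = t * fst q + snd q * (fst q * fst v + snd q * snd v)"
    unfolding t_def by (simp_all add: power2_eq_square algebra_simps)
  have e1: "fst v = - t * snd q" using f1 S1_norm[OF q] qv by simp
  have e2: "snd v = t * fst q" using f2 S1_norm[OF q] qv by simp
  have "t\<^sup>2 = t\<^sup>2 * ((fst q)\<^sup>2 + (snd q)\<^sup>2)" using S1_norm[OF q] by simp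
  also have "\<dots> = (fst v)\<^sup>2 + (snd v)\<^sup>2" unfolding e1 e2 by (simp add: power2_eq_square algebra_simps)
  finally have "t\<^sup>2 = 1" using S1_norm[OF v] by simp
  hence "t = 1 \<or> t = -1" by (simp add: power2_eq_1_iff)
  moreover have "v = (- t * snd q, t * fst q)" using e1 e2 by (simp add: prod_eq_iff)
  ultimately show ?thesis using that by blast
qed

lemma unit_vector_eq:
  assumes q: "q \<in> S1" and u: "u \<in> S1"
    and rot: "fst u * snd q - snd u * fst q = 0" and along: "fst u * fst q + snd u * snd q \<ge> 0"
  shows "u = q"
proof -
  define A where "A = fst u * fst q + snd u * snd q"
  have nq: "(fst q)\<^sup>2 + (snd q)\<^sup>2 = 1" using q by (rule S1_norm)
  have f1: "fst u * ((fst q)\<^sup>2 + (snd q)\<^sup>2) = A * fst q + (fst u * snd q - snd u * fst q) * snd q"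
   and f2: "snd u * ((fst q)\<^sup>2 + (snd q)\<^sup>2) = A * snd q - (fst u * snd q - snd u * fst q) * fst q"
    unfolding A_def by (simp_all add: power2_eq_square algebra_simps)
  have u1: "fst u = A * fst q" using f1 nq rot by simp
  have u2: "snd u = A * snd q" using f2 nq rot by simp
  have "A\<^sup>2 = A\<^sup>2 * ((fst q)\<^sup>2 + (snd q)\<^sup>2)" using nq by simp
  also have "\<dots> = (fst u)\<^sup>2 + (snd u)\<^sup>2" unfolding u1 u2 by (simp add: power2_eq_square algebra_simps)
  finally have "A = 1" using S1_norm[OF u] along unfolding A_def by (simp add: power2_eq_1_iff)
  thus ?thesis using u1 u2 by (simp add: prod_eq_iff)
qed

lemma rational_half_line_infinite:
  assumes "u \<in> S1" and "rational_dir u" and "\<sigma> \<noteq> 0"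
  shows "infinite {x \<in> line u. \<sigma> * rcoord x u \<ge> 0}"
proof -
  obtain a b :: int where ab: "(a, b) \<noteq> (0, 0)" "fst u * real_of_int b = snd u * real_of_int a"
    using assms(2) unfolding rational_dir_def by blast
  define d where "d = real_of_int a * fst u + real_of_int b * snd u"
  have "real_of_int a * ((fst u)\<^sup>2 + (snd u)\<^sup>2)
          = d * fst u + snd u * (real_of_int a * snd u - real_of_int b * fst u)"
   and "real_of_int b * ((fst u)\<^sup>2 + (snd u)\<^sup>2)
          = d * snd u + fst u * (real_of_int b * fst u - real_of_int a * snd u)"
    unfolding d_def by (simp_all add: power2_eq_square algebra_simps)
  hence "real_of_int a = d * fst u" "real_of_int b = d * snd u"
    using S1_norm[OF assms(1)] ab(2) by (simp_all add: mult.commute)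
  hence "d \<noteq> 0" using ab(1) by auto
  define g where "g k = (k * b, - k * a)" for k :: int
  have "inj g" unfolding g_def inj_def using ab(1) by auto
  have g_line: "g k \<in> line u" and g_rc: "rcoord (g k) u = real_of_int k * d" for k
    unfolding g_def line_def ip_def rcoord_def d_def using ab(2) by (simp_all add: algebra_simps)
  define c where "c = \<sigma> * d"
  have "c \<noteq> 0" using \<open>d \<noteq> 0\<close> assms(3) unfolding c_def by simp
  have "infinite {k :: int. 0 \<le> c * real_of_int k}"
  proof (cases "c > 0")
    case True
    hence "{0..} \<subseteq> {k :: int. 0 \<le> c * real_of_int k}" by auto
    thus ?thesis using infinite_Ici[of "0::int"] finite_subset by blast
  next
    case False
    hence "{..0} \<subseteq> {k :: int. 0 \<le> c * real_of_int k}" using \<open>c \<noteq> 0\<close>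
      by (auto simp: zero_le_mult_iff)
    thus ?thesis using infinite_Iic[of "0::int"] finite_subset by blast
  qed
  hence "infinite (g ` {k. 0 \<le> c * real_of_int k})"
    using finite_image_iff[OF inj_on_subset[OF \<open>inj g\<close>]] by blast
  moreover have "g ` {k. 0 \<le> c * real_of_int k} \<subseteq> {x \<in> line u. \<sigma> * rcoord x u \<ge> 0}"
    using g_line g_rc unfolding c_def by (auto simp: algebra_simps)
  ultimately show ?thesis using finite_subset by blast
qed

lemma small_positive_slope:
  fixes b c :: "'a \<Rightarrow> real"
  assumes "finite Y" and "\<forall>y\<in>Y. P y \<longrightarrow> c y > 0"
  shows "\<exists>k>0. \<forall>y\<in>Y. P y \<longrightarrow> k * \<bar>b y\<bar> < c y"
proof -
  define k where "k = Min (insert 1 ((\<lambda>y. c y / (\<bar>b y\<bar> + 1)) ` {y \<in> Y. P y}))"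
  have fin: "finite (insert 1 ((\<lambda>y. c y / (\<bar>b y\<bar> + 1)) ` {y \<in> Y. P y}))"
    using assms(1) by simp
  have "k > 0" unfolding k_def using fin assms(2) by (subst Min_gr_iff) auto
  moreover have "k * \<bar>b y\<bar> < c y" if "y \<in> Y" "P y" for y
  proof -
    have cy: "c y > 0" using assms(2) that by blast
    have "k \<le> c y / (\<bar>b y\<bar> + 1)" unfolding k_def using fin that by (intro Min_le) auto
    hence "k * \<bar>b y\<bar> \<le> c y / (\<bar>b y\<bar> + 1) * \<bar>b y\<bar>" by (rule mult_right_mono) simp
    also have "\<dots> < c y" using cy by (simp add: field_simps)
    finally show ?thesis .
  qed
  ultimately show ?thesis by blast
qed

section \<open>The extreme values of alpha\<close>

lemma line_subset_closure:
  assumes "X \<in> U" and "\<forall>y\<in>X. ip y u < 0"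
  shows "line u \<subseteq> closure_U U (halfplane u)"
proof
  fix x assume x: "x \<in> line u"
  have "vadd x ` X \<subseteq> halfplane u"
    using x assms(2) unfolding line_def halfplane_def by (auto simp: ip_vadd)
  hence "x \<in> step U (halfplane u)" using assms(1) unfolding step_def by auto
  thus "x \<in> closure_U U (halfplane u)" using step_subset_closure by blast
qed

text \<open>Hence such a direction has alpha = 0: for rational u both half-lines are infected
  without help, and for irrational u the direction is unstable.\<close>
lemma alpha_dir_zero_if_rule_below:
  assumes "u \<in> S1" and "X \<in> U" and "\<forall>y\<in>X. ip y u < 0"
  shows "alpha_dir U u = 0"
proof (cases "rational_dir u")
  case True
  have L: "line u \<subseteq> closure_U U (halfplane u \<union> {})"
    using line_subset_closure[OF assms(2,3)] by simp
  have "infinite (line_plus u)" "infinite (line_minus u)"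
    using rational_half_line_infinite[OF assms(1) True, of 1]
      rational_half_line_infinite[OF assms(1) True, of "-1"]
    unfolding line_plus_def line_minus_def by simp_all
  moreover have "closure_U U (halfplane u \<union> {}) \<inter> line_plus u = line_plus u"
    "closure_U U (halfplane u \<union> {}) \<inter> line_minus u = line_minus u"
    using L unfolding line_plus_def line_minus_def by blast+
  ultimately have plus: "infinite (closure_U U (halfplane u \<union> {}) \<inter> line_plus u)"
    and minus: "infinite (closure_U U (halfplane u \<union> {}) \<inter> line_minus u)" by simp_all
  have "alpha_plus U u \<le> enat (card ({} :: site set))"
    unfolding alpha_plus_def by (rule Inf_lower) (use plus in blast)
  moreover have "alpha_minus U u \<le> enat (card ({} :: site set))"
    unfolding alpha_minus_def by (rule Inf_lower) (use minus in blast)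
  ultimately have "alpha_plus U u = 0" "alpha_minus U u = 0" by (simp_all add: zero_enat_def[symmetric])
  thus ?thesis unfolding alpha_dir_def using True by simp
next
  case False
  have "(0, 0) \<in> closure_U U (halfplane u)"
    using line_subset_closure[OF assms(2,3)] unfolding line_def ip_def by auto
  moreover have "(0, 0) \<notin> halfplane u" unfolding halfplane_def ip_def by simp
  ultimately have "u \<notin> stable_set U" unfolding stable_set_def by auto
  thus ?thesis unfolding alpha_dir_def using False by simp
qed

definition lex_positive :: "dir \<Rightarrow> real \<Rightarrow> site \<Rightarrow> bool" where
  "lex_positive q \<sigma> y \<longleftrightarrow> ip y q > 0 \<or> (ip y q = 0 \<and> \<sigma> * rcoord y q > 0)"

text \<open>If every rule has a lexicographically positive site, q is stable: the closed
  complement of H_q is an invariant region.\<close>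
lemma stable_if_lex_positive_rules:
  assumes "q \<in> S1" and lex: "\<forall>X\<in>U. \<exists>y\<in>X. lex_positive q \<sigma> y"
  shows "q \<in> stable_set U"
proof -
  have "closure_U U (halfplane q) \<inter> {x. ip x q \<ge> 0} = {}"
  proof (rule closure_avoids_invariant_set)
    show "halfplane q \<inter> {x. ip x q \<ge> 0} = {}" unfolding halfplane_def by auto
  next
    fix x X assume x: "x \<in> {x. ip x q \<ge> 0}" and X: "X \<in> U"
    then obtain y where y: "y \<in> X" "lex_positive q \<sigma> y" using lex by blast
    hence "vadd x y \<in> {x. ip x q \<ge> 0}" using x unfolding lex_positive_def by (auto simp: ip_vadd)
    thus "\<exists>y\<in>X. vadd x y \<in> {x. ip x q \<ge> 0}" using y(1) by blast
  qed
  hence "closure_U U (halfplane q) = halfplane q"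
    using subset_closure[of "halfplane q" U] unfolding halfplane_def by fastforce
  thus ?thesis using assms(1) unfolding stable_set_def by simp
qed

lemma lex_potential:
  assumes "finite Y" and sig: "\<sigma> = 1 \<or> \<sigma> = -1"
  obtains k where "k > 0"
    and "\<And>y. y \<in> Y \<Longrightarrow> lex_positive q \<sigma> y \<Longrightarrow> 0 < ip y q + k * (\<sigma> * rcoord y q)"
proof -
  obtain k where k: "k > 0" "\<forall>y\<in>Y. ip y q > 0 \<longrightarrow> k * \<bar>rcoord y q\<bar> < ip y q"
    using small_positive_slope[OF assms(1), of "\<lambda>y. ip y q > 0" "\<lambda>y. ip y q" "\<lambda>y. rcoord y q"]
    by auto
  have "0 < ip y q + k * (\<sigma> * rcoord y q)" if y: "y \<in> Y" "lex_positive q \<sigma> y" for y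
  proof (cases "ip y q > 0")
    case True
    have "- \<bar>rcoord y q\<bar> \<le> \<sigma> * rcoord y q" using sig by auto
    hence "- (k * \<bar>rcoord y q\<bar>) \<le> k * (\<sigma> * rcoord y q)" using k(1)
      by (metis minus_mult_right mult_le_cancel_left_pos)
    thus ?thesis using k(2) y(1) True by fastforce
  qed (use y(2) k(1) in \<open>auto simp: lex_positive_def\<close>)
  with k(1) show ?thesis using that by blast
qed

text \<open>If every rule has a lexicographically positive site, a finite set Z only infects a
  bounded part of the sigma side of l_q: the lexicographically nonnegative sites whose
  potential exceeds its maximum on Z form an invariant region.\<close>
lemma bounded_growth_if_lex_positive_rules:
  assumes U: "update_family U" and q: "q \<in> S1" and sig: "\<sigma> = 1 \<or> \<sigma> = -1"
    and lex: "\<forall>X\<in>U. \<exists>y\<in>X. lex_positive q \<sigma> y" and Z: "finite Z"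
  shows "finite (closure_U U (halfplane q \<union> Z) \<inter> {x \<in> line q. \<sigma> * rcoord x q \<ge> 0})"
proof -
  have "finite (\<Union>U)" using U unfolding update_family_def by auto
  then obtain k where k: "k > 0"
    and h_pos: "\<And>y. y \<in> \<Union>U \<Longrightarrow> lex_positive q \<sigma> y \<Longrightarrow> 0 < ip y q + k * (\<sigma> * rcoord y q)"
    using lex_potential[OF _ sig] by blast
  define h where "h x = ip x q + k * (\<sigma> * rcoord x q)" for x
  define c where "c = Max (insert 0 (h ` Z)) + 1"
  have c: "h z < c" if "z \<in> Z" for z
  proof -
    have "h z \<le> Max (insert 0 (h ` Z))" using Z that by (intro Max_ge) auto
    thus ?thesis unfolding c_def by linarith
  qed
  define K where "K = {x. (ip x q > 0 \<or> (ip x q = 0 \<and> \<sigma> * rcoord x q \<ge> 0)) \<and> h x \<ge> c}"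
  have avoid: "closure_U U (halfplane q \<union> Z) \<inter> K = {}"
  proof (rule closure_avoids_invariant_set)
    show "(halfplane q \<union> Z) \<inter> K = {}" unfolding K_def halfplane_def using c by force
  next
    fix x X assume x: "x \<in> K" and X: "X \<in> U"
    then obtain y where y: "y \<in> X" "lex_positive q \<sigma> y" using lex by blast
    have "0 < h y" unfolding h_def using h_pos y X by blast
    hence "vadd x y \<in> K" using x y(2)
      unfolding K_def lex_positive_def h_def ip_vadd rcoord_vadd distrib_left mem_Collect_eq by auto
    thus "\<exists>y\<in>X. vadd x y \<in> K" using y(1) by blast
  qed
  have "{x \<in> line q. \<sigma> * rcoord x q \<ge> 0} - K \<subseteq> {x \<in> line q. \<bar>rcoord x q\<bar> \<le> c / k}"
  proof
    fix x assume x: "x \<in> {x \<in> line q. \<sigma> * rcoord x q \<ge> 0} - K"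
    hence on_line: "x \<in> line q" "ip x q = 0" and side: "\<sigma> * rcoord x q \<ge> 0"
      unfolding line_def by auto
    have "\<bar>rcoord x q\<bar> = \<sigma> * rcoord x q" using sig side by auto
    hence "k * \<bar>rcoord x q\<bar> < c" using x on_line side unfolding K_def h_def by auto
    hence "\<bar>rcoord x q\<bar> \<le> c / k" using k by (simp add: pos_le_divide_eq mult.commute)
    thus "x \<in> {x \<in> line q. \<bar>rcoord x q\<bar> \<le> c / k}" using on_line by blast
  qed
  with avoid have "closure_U U (halfplane q \<union> Z) \<inter> {x \<in> line q. \<sigma> * rcoord x q \<ge> 0}
      \<subseteq> {x \<in> line q. \<bar>rcoord x q\<bar> \<le> c / k}" by blast
  thus ?thesis using finite_line_segment[OF q, of "c / k"] by (rule finite_subset)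
qed

text \<open>Together: if every rule has a lexicographically positive site, then alpha_dir U q is
  infinite, since q is stable and one of alpha_plus, alpha_minus is infinite.\<close>
lemma alpha_dir_infinite_if_lex_positive_rules:
  assumes U: "update_family U" and q: "q \<in> S1" and sig: "\<sigma> = 1 \<or> \<sigma> = -1"
    and lex: "\<forall>X\<in>U. \<exists>y\<in>X. lex_positive q \<sigma> y"
  shows "alpha_dir U q = \<infinity>"
proof -
  have stable: "q \<in> stable_set U" using q lex by (rule stable_if_lex_positive_rules)
  have growth: "\<forall>Z. finite Z \<longrightarrow>
      finite (closure_U U (halfplane q \<union> Z) \<inter> {x \<in> line q. \<sigma> * rcoord x q \<ge> 0})"
    using bounded_growth_if_lex_positive_rules[OF U q sig lex] by blast
  from sig have "alpha_plus U q = \<infinity> \<or> alpha_minus U q = \<infinity>"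
  proof
    assume "\<sigma> = 1"
    hence "{enat (card Z) | Z. finite Z \<and>
             infinite (closure_U U (halfplane q \<union> Z) \<inter> line_plus q)} = {}"
      using growth unfolding line_plus_def by auto
    hence "alpha_plus U q = top" unfolding alpha_plus_def by (simp only: Inf_empty)
    thus ?thesis by (simp add: top_enat_def)
  next
    assume "\<sigma> = -1"
    hence "{enat (card Z) | Z. finite Z \<and>
             infinite (closure_U U (halfplane q \<union> Z) \<inter> line_minus q)} = {}"
      using growth unfolding line_minus_def by auto
    hence "alpha_minus U q = top" unfolding alpha_minus_def by (simp only: Inf_empty)
    thus ?thesis by (simp add: top_enat_def)
  qed
  thus ?thesis unfolding alpha_dir_def using stable by auto
qed

section \<open>Tilting a semicircle\<close>

lemma tilted_semicircle:
  assumes q: "q \<in> S1" and sig: "\<sigma> = 1 \<or> \<sigma> = -1" and k: "k > 0"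
  defines "v \<equiv> (- \<sigma> * snd q, \<sigma> * fst q)"
  obtains v' where "v' \<in> S1"
    and "\<And>u. u \<in> closed_semicircle v' \<Longrightarrow> u \<in> open_semicircle v \<or> u = q \<or>
           (0 < \<sigma> * (fst u * snd q - snd u * fst q) \<and>
            \<sigma> * (fst u * snd q - snd u * fst q) \<le> k * (fst u * fst q + snd u * snd q))"
proof -
  define m where "m = sqrt (1 + k\<^sup>2)"
  have m: "m > 0" "m\<^sup>2 = 1 + k\<^sup>2" unfolding m_def by (auto simp: add_pos_nonneg)
  define v' where "v' = ((fst v + k * fst q) / m, (snd v + k * snd q) / m)"
  have "(fst v + k * fst q)\<^sup>2 + (snd v + k * snd q)\<^sup>2 = (\<sigma> * \<sigma> + k\<^sup>2) * ((fst q)\<^sup>2 + (snd q)\<^sup>2)"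
    unfolding v_def by (simp add: power2_eq_square algebra_simps)
  also have "\<dots> = m\<^sup>2" using S1_norm[OF q] m(2) sig by auto
  finally have "v' \<in> S1"
    unfolding S1_def v'_def using m(1) by (simp add: power_divide add_divide_distrib[symmetric])
  moreover have "u \<in> open_semicircle v \<or> u = q \<or>
           (0 < \<sigma> * (fst u * snd q - snd u * fst q) \<and>
            \<sigma> * (fst u * snd q - snd u * fst q) \<le> k * (fst u * fst q + snd u * snd q))"
    if u: "u \<in> closed_semicircle v'" for u
  proof -
    define A where "A = fst u * fst q + snd u * snd q"
    define \<rho> where "\<rho> = fst u * snd q - snd u * fst q"
    have uS: "u \<in> S1" using u unfolding closed_semicircle_def by auto
    have uv: "fst u * fst v + snd u * snd v = - (\<sigma> * \<rho>)"
      unfolding v_def \<rho>_def by (simp add: algebra_simps)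
    have "(fst u * fst v + snd u * snd v + k * A) / m \<ge> 0"
      using u unfolding closed_semicircle_def v'_def A_def by (simp add: algebra_simps add_divide_distrib)
    hence tilt: "\<sigma> * \<rho> \<le> k * A" using uv m(1) by (simp add: zero_le_divide_iff)
    consider "\<sigma> * \<rho> < 0" | "\<sigma> * \<rho> = 0" | "\<sigma> * \<rho> > 0" by linarith
    thus ?thesis
    proof cases
      case 1
      hence "u \<in> open_semicircle v" using uS uv unfolding open_semicircle_def by simp
      thus ?thesis by blast
    next
      case 2
      hence \<rho>0: "\<rho> = 0" using sig by auto
      have "0 \<le> k * A" using 2 tilt by linarith
      hence "A \<ge> 0" using k by (simp add: zero_le_mult_iff)
      hence "u = q" using unit_vector_eq[OF q uS] \<rho>0 unfolding A_def \<rho>_def by blast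
      thus ?thesis by blast
    next
      case 3
      thus ?thesis using tilt unfolding A_def \<rho>_def by blast
    qed
  qed
  ultimately show ?thesis using that by blast
qed

lemma lex_nonpositive_site_below:
  assumes q: "q \<in> S1" and sig: "\<sigma> = 1 \<or> \<sigma> = -1" and y: "y \<noteq> (0, 0)"
    and nlex: "\<not> lex_positive q \<sigma> y"
    and slope: "ip y q < 0 \<longrightarrow> k * \<bar>rcoord y q\<bar> < - ip y q"
    and A: "A > 0" and \<rho>: "0 < \<sigma> * \<rho>" "\<sigma> * \<rho> \<le> k * A"
  shows "A * ip y q + \<rho> * rcoord y q < 0"
proof -
  have split: "\<rho> * rcoord y q = (\<sigma> * \<rho>) * (\<sigma> * rcoord y q)" using sig by auto
  show ?thesis
  proof (cases "ip y q = 0")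
    case True
    hence "\<sigma> * rcoord y q < 0"
      using nlex site_eq_zero[OF q True] y sig unfolding lex_positive_def by fastforce
    with \<rho>(1) have "(\<sigma> * \<rho>) * (\<sigma> * rcoord y q) < 0" by (rule mult_pos_neg)
    thus ?thesis using True unfolding split by simp
  next
    case False
    hence neg: "ip y q < 0" using nlex unfolding lex_positive_def by auto
    have "\<sigma> * rcoord y q \<le> \<bar>rcoord y q\<bar>" using sig by auto
    hence "(\<sigma> * \<rho>) * (\<sigma> * rcoord y q) \<le> (\<sigma> * \<rho>) * \<bar>rcoord y q\<bar>"
      using \<rho>(1) by (intro mult_left_mono) auto
    also have "\<dots> \<le> (k * A) * \<bar>rcoord y q\<bar>" using \<rho>(2) by (intro mult_right_mono) auto
    also have "\<dots> = A * (k * \<bar>rcoord y q\<bar>)" by simp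
    also have "\<dots> < A * (- ip y q)" using slope neg A by (intro mult_strict_left_mono) auto
    finally show ?thesis unfolding split by (simp add: algebra_simps)
  qed
qed

text \<open>Consequently, if some rule X0 has no lexicographically positive site, then every
  direction of the third kind lies below X0 and has alpha = 0.\<close>
lemma alpha_dir_zero_if_tilted:
  assumes q: "q \<in> S1" and sig: "\<sigma> = 1 \<or> \<sigma> = -1" and u: "u \<in> S1" and k: "k > 0"
    and X0: "X0 \<in> U" "(0, 0) \<notin> X0" "\<forall>y\<in>X0. \<not> lex_positive q \<sigma> y"
    and slope: "\<forall>y\<in>X0. ip y q < 0 \<longrightarrow> k * \<bar>rcoord y q\<bar> < - ip y q"
    and tilt: "0 < \<sigma> * (fst u * snd q - snd u * fst q)"
      "\<sigma> * (fst u * snd q - snd u * fst q) \<le> k * (fst u * fst q + snd u * snd q)"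
  shows "alpha_dir U u = 0"
proof -
  let ?A = "fst u * fst q + snd u * snd q" and ?\<rho> = "fst u * snd q - snd u * fst q"
  have "0 < k * ?A" using tilt by linarith
  hence A_pos: "0 < ?A" using k by (simp add: zero_less_mult_iff)
  have "\<forall>y\<in>X0. ip y u < 0"
  proof
    fix y assume y: "y \<in> X0"
    have "y \<noteq> (0, 0)" "\<not> lex_positive q \<sigma> y" using y X0(2,3) by auto
    moreover have "ip y q < 0 \<longrightarrow> k * \<bar>rcoord y q\<bar> < - ip y q" using y slope by blast
    ultimately have "?A * ip y q + ?\<rho> * rcoord y q < 0"
      using lex_nonpositive_site_below[OF q sig _ _ _ A_pos tilt] by blast
    thus "ip y u < 0" unfolding ip_in_frame[OF q, of y u] .
  qed
  thus ?thesis by (rule alpha_dir_zero_if_rule_below[OF u X0(1)])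
qed

text \<open>The infimum defining alpha_family is attained, since enat is well ordered.\<close>
lemma alpha_family_attained:
  obtains v where "v \<in> S1" and "\<And>u. u \<in> open_semicircle v \<Longrightarrow> alpha_dir U u \<le> alpha_family U"
proof -
  have "(1, 0) \<in> S1" unfolding S1_def by simp
  hence "alpha_family U \<in> (\<lambda>v. SUP u\<in>open_semicircle v. alpha_dir U u) ` S1"
    unfolding alpha_family_def Inf_enat_def by (auto intro: LeastI)
  then obtain v where "v \<in> S1" "alpha_family U = (SUP u\<in>open_semicircle v. alpha_dir U u)" by auto
  thus ?thesis using that by (metis SUP_upper)
qed

lemma balanced_if_boundary_small:
  assumes U: "update_family U" and crit: "critical U" and v: "v \<in> S1"
    and below: "\<And>u. u \<in> open_semicircle v \<Longrightarrow> alpha_dir U u \<le> alpha_family U"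
    and q: "q \<in> S1" "fst q * fst v + snd q * snd v = 0"
    and small: "alpha_dir U q \<le> alpha_family U"
  shows "balanced U"
proof (cases "alpha_family U = \<infinity>")
  case True
  thus ?thesis unfolding balanced_def using crit v by (intro conjI bexI[of _ v]) simp_all
next
  case False
  obtain \<sigma> :: real where sig: "\<sigma> = 1 \<or> \<sigma> = -1" and v_rot: "v = (- \<sigma> * snd q, \<sigma> * fst q)"
    using orthogonal_unit_vector[OF q(1) v q(2)] by blast
  have "\<not> (\<forall>X\<in>U. \<exists>y\<in>X. lex_positive q \<sigma> y)"
  proof
    assume "\<forall>X\<in>U. \<exists>y\<in>X. lex_positive q \<sigma> y"
    hence "alpha_dir U q = \<infinity>" by (rule alpha_dir_infinite_if_lex_positive_rules[OF U q(1) sig])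
    thus False using small False by (metis top.extremum_uniqueI top_enat_def)
  qed
  then obtain X0 where X0: "X0 \<in> U" "\<forall>y\<in>X0. \<not> lex_positive q \<sigma> y" by blast
  have X0_fin: "finite X0" and X0_nz: "(0, 0) \<notin> X0" using U X0(1) unfolding update_family_def by auto
  obtain k where k: "k > 0" "\<forall>y\<in>X0. ip y q < 0 \<longrightarrow> k * \<bar>rcoord y q\<bar> < - ip y q"
    using small_positive_slope[OF X0_fin, of "\<lambda>y. ip y q < 0" "\<lambda>y. - ip y q" "\<lambda>y. rcoord y q"]
    by auto
  obtain v' where v': "v' \<in> S1" and trichotomy: "\<And>u. u \<in> closed_semicircle v' \<Longrightarrow>
      u \<in> open_semicircle v \<or> u = q \<or>
      (0 < \<sigma> * (fst u * snd q - snd u * fst q) \<and>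
       \<sigma> * (fst u * snd q - snd u * fst q) \<le> k * (fst u * fst q + snd u * snd q))"
    using tilted_semicircle[OF q(1) sig k(1)] unfolding v_rot by blast
  have "alpha_dir U u \<le> alpha_family U" if u: "u \<in> closed_semicircle v'" for u
  proof -
    have uS: "u \<in> S1" using u unfolding closed_semicircle_def by auto
    from trichotomy[OF u] consider "u \<in> open_semicircle v" | "u = q"
      | "0 < \<sigma> * (fst u * snd q - snd u * fst q)"
        "\<sigma> * (fst u * snd q - snd u * fst q) \<le> k * (fst u * fst q + snd u * snd q)" by blast
    thus ?thesis
    proof cases
      case 1
      thus ?thesis by (rule below)
    next
      case 2
      thus ?thesis using small by simp
    next
      case 3
      thus ?thesis using alpha_dir_zero_if_tilted[OF q(1) sig uS k(1) X0(1) X0_nz X0(2) k(2)] by simp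
    qed
  qed
  thus ?thesis unfolding balanced_def using crit v' by blast
qed

theorem mainTheorem4:
  fixes U :: "site set set"
  assumes "update_family U"
    and "unbalanced U"
  shows "\<exists>u\<in>S1. min (alpha_dir U u) (alpha_dir U (- fst u, - snd u)) \<ge> alpha_family U + 1"
proof -
  have crit: "critical U" and not_bal: "\<not> balanced U" using assms(2) unfolding unbalanced_def by auto
  obtain v where v: "v \<in> S1" and below: "\<And>u. u \<in> open_semicircle v \<Longrightarrow> alpha_dir U u \<le> alpha_family U"
    using alpha_family_attained by blast
  obtain p where p: "p \<in> closed_semicircle v" and p_big: "alpha_family U < alpha_dir U p"
    using not_bal crit v unfolding balanced_def by (auto simp: not_le)
  have pS: "p \<in> S1" using p unfolding closed_semicircle_def by auto
  have p_orth: "fst p * fst v + snd p * snd v = 0"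
    using p p_big below[of p] unfolding closed_semicircle_def open_semicircle_def by fastforce
  have "alpha_family U + 1 \<le> alpha_dir U (- fst p, - snd p)"
  proof (rule ccontr)
    assume "\<not> ?thesis"
    hence "alpha_dir U (- fst p, - snd p) \<le> alpha_family U"
      by (cases "alpha_dir U (- fst p, - snd p)"; cases "alpha_family U") (auto simp: one_enat_def)
    moreover have "(- fst p, - snd p) \<in> S1" using pS unfolding S1_def by simp
    ultimately have "balanced U"
      using balanced_if_boundary_small[OF assms(1) crit v below] p_orth by simp
    thus False using not_bal by simp
  qed
  moreover have "alpha_family U + 1 \<le> alpha_dir U p" using ileI1[OF p_big] by (simp add: eSuc_plus_1)
  ultimately show ?thesis using pS by auto
qed

end
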